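(* Let $W\in\mathcal{P}(\mathcal{Y}|\mathcal{X})$ be a symmetric and singular channel with no all-zero column, and fix $x_{\mathrm o}\in\mathcal{X}$ and $\epsilon\in(0,1)$. (i) For every $x\in\mathcal{X}$ and $\lambda\in\mathbb{R}$, $M_x(\lambda)=M_{x_{\mathrm o}}(\lambda)$. (ii) For all $x\in\mathcal{X}$: $\mathrm{E}_{W(\cdot|x)}[\ln\frac{W(Y|x)}{q(Y)}]=\mathrm{E}_{W(\cdot|x_{\mathrm o})}[\ln\frac{W(Y|x_{\mathrm o})}{q(Y)}]=C(W)$; $\mathrm{Var}_{W(\cdot|x)}[\ln\frac{W(Y|x)}{q(Y)}]=\mathrm{Var}_{W(\cdot|x_{\mathrm o})}[\ln\frac{W(Y|x_{\mathrm o})}{q(Y)}]=:V(W)$ and $V(W)=V_\epsilon(W)$; and $m_3(x)=m_3(x_{\mathrm o})$. (iii) For every $R\ge0$, every $(N,R)$ code with ideal feedback and every message $m$, $P_{\mathbf{Y}^N|M}\{\mathcal{S}(R)\mid m\}=W\{\mathcal{S}(R)\mid\mathbf{x}_{\mathrm o}^N\}$, where $\mathbf{x}_{\mathrm o}^N$ is the all-$x_{\mathrm o}$ sequence. (iv) $\mathrm{E}_q[-\ln\alpha_Y]=C(W)$, $\mathrm{Var}_q[-\ln\alpha_Y]=V(W)$ and $\mathrm{E}_q[|-\ln\alpha_Y-C(W)|^3]=m_3(x_{\mathrm o})$.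
   Context: $\mathcal{X},\mathcal{Y}$ finite. Symmetric (Gallager): outputs partitionable into subsets within each of which every row of the transition submatrix is a permutation of every other row and every column of every other column. Singular: $W(y|x)W(y|z)>0$ implies $W(y|x)=W(y|z)$. $q(y)=\sum_x\frac1{|\mathcal{X}|}W(y|x)$; $\alpha_y=\sum_{x:W(y|x)>0}\frac1{|\mathcal{X}|}$; $M_x(\lambda)=\mathrm{E}_{W(\cdot|x)}[e^{\lambda\ln\frac{W(Y|x)}{q(Y)}}]$; $m_3(x)=\mathrm{E}_{W(\cdot|x)}[|\ln\frac{W(Y|x)}{q(Y)}-C(W)|^3]$; $C(W)$ is the capacity. For $P\in\mathcal{P}(\mathcal{X})$, $q_P(y)=\sum_xP(x)W(y|x)$, $V(P,W)=\sum_{x,y}P(x)W(y|x)[\ln\frac{W(y|x)}{q_P(y)}-\sum_bW(b|x)\ln\frac{W(b|x)}{q_P(b)}]^2$, $V_\epsilon(W)=\min_{Q:I(Q;W)=C(W)}V(Q,W)$ for $\epsilon<1/2$ and the corresponding max for $\epsilon\ge1/2$. $\mathcal{S}(R)=\{\mathbf{y}^N:\frac1N\sum_n\ln\frac1{\alpha_{y_n}}\le R\}$. A code with ideal feedback has message set $\{1,\dots,\lceil e^{NR}\rceil\}$, encoders $f_n:\mathcal{M}\times\mathcal{Y}^{n-1}\to\mathcal{X}$, and $P_{\mathbf{Y}^N|M}(\mathbf{y}^N|m)=\prod_nW(y_n|f_n(m,\mathbf{y}^{n-1}))$. *)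

theory Defs
  imports "HOL-Analysis.Analysis" "HOL-Library.Disjoint_Sets"
begin

definition channel :: "('x::finite \<Rightarrow> 'y::finite \<Rightarrow> real) \<Rightarrow> bool" where
  "channel W \<longleftrightarrow> (\<forall>x y. 0 \<le> W x y) \<and> (\<forall>x. (\<Sum>y\<in>UNIV. W x y) = 1)"

definition dist :: "('x::finite \<Rightarrow> real) \<Rightarrow> bool" where
  "dist P \<longleftrightarrow> (\<forall>x. 0 \<le> P x) \<and> (\<Sum>x\<in>UNIV. P x) = 1"

definition gallager_symmetric :: "('x::finite \<Rightarrow> 'y::finite \<Rightarrow> real) \<Rightarrow> bool" where
  "gallager_symmetric W \<longleftrightarrow> (\<exists>Part. partition_on (UNIV :: 'y set) Part \<and>
     (\<forall>B\<in>Part.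
        (\<forall>x x'. \<exists>\<sigma>. bij_betw \<sigma> B B \<and> (\<forall>y\<in>B. W x' y = W x (\<sigma> y))) \<and>
        (\<forall>y\<in>B. \<forall>y'\<in>B. \<exists>\<pi>. bij \<pi> \<and> (\<forall>x. W x y' = W (\<pi> x) y))))"

definition singular_channel :: "('x::finite \<Rightarrow> 'y::finite \<Rightarrow> real) \<Rightarrow> bool" where
  "singular_channel W \<longleftrightarrow> (\<forall>x z y. W x y * W z y > 0 \<longrightarrow> W x y = W z y)"

definition no_zero_column :: "('x::finite \<Rightarrow> 'y::finite \<Rightarrow> real) \<Rightarrow> bool" where
  "no_zero_column W \<longleftrightarrow> (\<forall>y. \<exists>x. W x y \<noteq> 0)"

definition qU :: "('x::finite \<Rightarrow> 'y::finite \<Rightarrow> real) \<Rightarrow> 'y \<Rightarrow> real" where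
  "qU W y = (\<Sum>x\<in>UNIV. W x y / real CARD('x))"

definition alpha :: "('x::finite \<Rightarrow> 'y::finite \<Rightarrow> real) \<Rightarrow> 'y \<Rightarrow> real" where
  "alpha W y = (\<Sum>x\<in>{x. W x y > 0}. 1 / real CARD('x))"

definition idens :: "('x::finite \<Rightarrow> 'y::finite \<Rightarrow> real) \<Rightarrow> 'x \<Rightarrow> 'y \<Rightarrow> real" where
  "idens W x y = ln (W x y / qU W y)"

definition mgf :: "('x::finite \<Rightarrow> 'y::finite \<Rightarrow> real) \<Rightarrow> 'x \<Rightarrow> real \<Rightarrow> real" where
  "mgf W x lam = (\<Sum>y\<in>UNIV. W x y * exp (lam * idens W x y))"

definition mean_id :: "('x::finite \<Rightarrow> 'y::finite \<Rightarrow> real) \<Rightarrow> 'x \<Rightarrow> real" where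
  "mean_id W x = (\<Sum>y\<in>UNIV. W x y * idens W x y)"

definition var_id :: "('x::finite \<Rightarrow> 'y::finite \<Rightarrow> real) \<Rightarrow> 'x \<Rightarrow> real" where
  "var_id W x = (\<Sum>y\<in>UNIV. W x y * (idens W x y - mean_id W x)\<^sup>2)"

definition qP :: "('x::finite \<Rightarrow> real) \<Rightarrow> ('x \<Rightarrow> 'y::finite \<Rightarrow> real) \<Rightarrow> 'y \<Rightarrow> real" where
  "qP P W y = (\<Sum>x\<in>UNIV. P x * W x y)"

definition mutual_info :: "('x::finite \<Rightarrow> real) \<Rightarrow> ('x \<Rightarrow> 'y::finite \<Rightarrow> real) \<Rightarrow> real" where
  "mutual_info P W = (\<Sum>x\<in>UNIV. \<Sum>y\<in>UNIV. P x * W x y * ln (W x y / qP P W y))"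

definition capacity :: "('x::finite \<Rightarrow> 'y::finite \<Rightarrow> real) \<Rightarrow> real" where
  "capacity W = (SUP P\<in>{P. dist P}. mutual_info P W)"

definition m3 :: "('x::finite \<Rightarrow> 'y::finite \<Rightarrow> real) \<Rightarrow> 'x \<Rightarrow> real" where
  "m3 W x = (\<Sum>y\<in>UNIV. W x y * \<bar>idens W x y - capacity W\<bar> ^ 3)"

definition Vcond :: "('x::finite \<Rightarrow> real) \<Rightarrow> ('x \<Rightarrow> 'y::finite \<Rightarrow> real) \<Rightarrow> real" where
  "Vcond P W = (\<Sum>x\<in>UNIV. \<Sum>y\<in>UNIV. P x * W x y *
      (ln (W x y / qP P W y) - (\<Sum>b\<in>UNIV. W x b * ln (W x b / qP P W b)))\<^sup>2)"

definition Veps :: "('x::finite \<Rightarrow> 'y::finite \<Rightarrow> real) \<Rightarrow> real \<Rightarrow> real" where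
  "Veps W \<epsilon> = (if \<epsilon> < 1/2
      then Inf {Vcond Q W | Q. dist Q \<and> mutual_info Q W = capacity W}
      else Sup {Vcond Q W | Q. dist Q \<and> mutual_info Q W = capacity W})"

definition S_set :: "('x::finite \<Rightarrow> 'y::finite \<Rightarrow> real) \<Rightarrow> nat \<Rightarrow> real \<Rightarrow> 'y list set" where
  "S_set W N R = {ys. length ys = N \<and>
      (1 / real N) * (\<Sum>n<N. ln (1 / alpha W (ys ! n))) \<le> R}"

text \<open>Output law of a feedback code: encoders f n m (y_1..y_{n-1}) (0-indexed n).\<close>
definition fb_prob :: "('x::finite \<Rightarrow> 'y::finite \<Rightarrow> real) \<Rightarrow> nat \<Rightarrow>
    (nat \<Rightarrow> nat \<Rightarrow> 'y list \<Rightarrow> 'x) \<Rightarrow> nat \<Rightarrow> 'y list \<Rightarrow> real" where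
  "fb_prob W N f m ys = (\<Prod>n<N. W (f n m (take n ys)) (ys ! n))"

definition prod_prob :: "('x::finite \<Rightarrow> 'y::finite \<Rightarrow> real) \<Rightarrow> nat \<Rightarrow> (nat \<Rightarrow> 'x) \<Rightarrow> 'y list \<Rightarrow> real" where
  "prod_prob W N xs ys = (\<Prod>n<N. W (xs n) (ys ! n))"

end

theory Submission
  imports Defs
begin

(* Singularity makes the positive entries of each column equal, so q(y) = alpha_y W(y|x)
   whenever W(y|x) > 0: the information density ln (W(y|x)/q(y)) equals -ln alpha_y, a function
   of the output alone.  Gallager symmetry makes alpha constant on each block and the rows
   within a block permutations of each other, so the law of alpha_Y under W(.|x) does not depend
   on x; averaging over x shows that it is also the law of alpha_Y under q.  This gives all the
   moment identities, and, applied to the input chosen by the encoder after each output prefix,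
   the feedback statement by induction on the block length.  Finally
   I(P;W) = E[i(x;Y)] + sum_y q_P(y) ln (q(y)/q_P(y)), where the second term is nonpositive by
   Gibbs' inequality and vanishes exactly when q_P = q; this identifies C(W) and forces
   V(Q,W) = V(W) for every capacity-achieving Q. *)

lemma gibbs_inequality:
  fixes r u :: "'a \<Rightarrow> real"
  assumes "finite A" and r_nonneg: "\<And>a. a \<in> A \<Longrightarrow> 0 \<le> r a"
    and u_pos: "\<And>a. a \<in> A \<Longrightarrow> 0 < u a" and "sum r A = sum u A"
  shows "(\<Sum>a\<in>A. r a * ln (u a / r a)) \<le> 0"
    and "(\<Sum>a\<in>A. r a * ln (u a / r a)) = 0 \<Longrightarrow> a \<in> A \<Longrightarrow> r a = u a"
proof -
  define d where "d a = u a - r a - r a * ln (u a / r a)" for a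
  have d_nonneg: "0 \<le> d a" if "a \<in> A" for a
  proof (cases "r a = 0")
    case False
    then have "0 < r a" using r_nonneg[OF that] by simp
    moreover have "ln (u a / r a) \<le> u a / r a - 1"
      using u_pos[OF that] \<open>0 < r a\<close> by (intro ln_le_minus_one) simp
    ultimately have "r a * ln (u a / r a) \<le> u a - r a"
      using mult_left_mono[of _ _ "r a"] by (fastforce simp: field_simps)
    then show ?thesis by (simp add: d_def)
  qed (use u_pos[OF that] in \<open>simp add: d_def\<close>)
  have sum_d: "sum d A = - (\<Sum>a\<in>A. r a * ln (u a / r a))"
    unfolding d_def sum_subtractf using \<open>sum r A = sum u A\<close> by simp
  show "(\<Sum>a\<in>A. r a * ln (u a / r a)) \<le> 0"
    using sum_nonneg[of A d] d_nonneg sum_d by simp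
  assume "(\<Sum>a\<in>A. r a * ln (u a / r a)) = 0" and "a \<in> A"
  then have "d a = 0"
    using sum_nonneg_eq_0_iff[OF \<open>finite A\<close>, of d] d_nonneg sum_d by simp
  show "r a = u a"
  proof (cases "r a = 0")
    case False
    then have "0 < r a" using r_nonneg[OF \<open>a \<in> A\<close>] by simp
    have "r a * (u a / r a - 1) = u a - r a" using \<open>0 < r a\<close> by (simp add: field_simps)
    then have "r a * ln (u a / r a) = r a * (u a / r a - 1)"
      using \<open>d a = 0\<close> unfolding d_def by linarith
    then have "ln (u a / r a) = u a / r a - 1" using \<open>0 < r a\<close> by simp
    then have "u a / r a = 1"
      using ln_eq_minus_one[of "u a / r a"] u_pos[OF \<open>a \<in> A\<close>] \<open>0 < r a\<close> by simp
    then show ?thesis using \<open>0 < r a\<close> by simp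
  qed (use \<open>d a = 0\<close> u_pos[OF \<open>a \<in> A\<close>] in \<open>simp add: d_def\<close>)
qed

lemma channel_nonneg: "channel W \<Longrightarrow> 0 \<le> W x y"
  by (simp add: channel_def)

lemma channel_pos_iff: "channel W \<Longrightarrow> 0 < W x y \<longleftrightarrow> W x y \<noteq> 0"
  using channel_nonneg[of W x y] by auto

lemma alpha_eq_card:
  fixes W :: "'x::finite \<Rightarrow> 'y::finite \<Rightarrow> real"
  shows "alpha W y = real (card {x. 0 < W x y}) / real CARD('x)"
  by (simp add: alpha_def)

lemma alpha_pos:
  fixes W :: "'x::finite \<Rightarrow> 'y::finite \<Rightarrow> real"
  assumes "0 < W x y"
  shows "0 < alpha W y"
proof -
  have "{x. 0 < W x y} \<noteq> {}" using assms by blast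
  then show ?thesis by (simp add: alpha_eq_card card_gt_0_iff)
qed

lemma qU_ge:
  fixes W :: "'x::finite \<Rightarrow> 'y::finite \<Rightarrow> real"
  assumes "channel W"
  shows "W x y / real CARD('x) \<le> qU W y"
  unfolding qU_def using channel_nonneg[OF assms]
  by (intro member_le_sum) auto

lemma qU_pos_if_pos:
  fixes W :: "'x::finite \<Rightarrow> 'y::finite \<Rightarrow> real"
  assumes "channel W" and "0 < W x y"
  shows "0 < qU W y"
proof -
  have "0 < W x y / real CARD('x)" using assms(2) by simp
  then show ?thesis using qU_ge[OF assms(1), of x y] by linarith
qed

lemma qU_pos:
  fixes W :: "'x::finite \<Rightarrow> 'y::finite \<Rightarrow> real"
  assumes "channel W" and "no_zero_column W"
  shows "0 < qU W y"
proof -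
  obtain x where "W x y \<noteq> 0" using assms(2) unfolding no_zero_column_def by blast
  then show ?thesis using qU_pos_if_pos[OF assms(1)] channel_pos_iff[OF assms(1)] by blast
qed

lemma qU_eq_alpha_mult:
  fixes W :: "'x::finite \<Rightarrow> 'y::finite \<Rightarrow> real"
  assumes "channel W" and "singular_channel W" and "0 < W x y"
  shows "qU W y = alpha W y * W x y"
proof -
  have "qU W y = (\<Sum>x'\<in>{x'. 0 < W x' y}. W x' y / real CARD('x))"
    unfolding qU_def using assms(1)
    by (intro sum.mono_neutral_right) (auto simp: channel_pos_iff)
  also have "\<dots> = (\<Sum>x'\<in>{x'. 0 < W x' y}. W x y / real CARD('x))"
    using assms(2,3) unfolding singular_channel_def by (intro sum.cong) auto
  finally show ?thesis by (simp add: alpha_eq_card)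
qed

lemma idens_eq_minus_ln_alpha:
  fixes W :: "'x::finite \<Rightarrow> 'y::finite \<Rightarrow> real"
  assumes "channel W" and "singular_channel W" and "0 < W x y"
  shows "idens W x y = - ln (alpha W y)"
  using qU_eq_alpha_mult[OF assms] alpha_pos[of W x y] assms(3)
  by (simp add: idens_def ln_div)

lemma row_sum_idens_eq_alpha:
  fixes W :: "'x::finite \<Rightarrow> 'y::finite \<Rightarrow> real"
  assumes "channel W" and "singular_channel W"
  shows "(\<Sum>y\<in>UNIV. W x y * F (idens W x y)) = (\<Sum>y\<in>UNIV. W x y * F (- ln (alpha W y)))"
proof (intro sum.cong refl)
  fix y
  show "W x y * F (idens W x y) = W x y * F (- ln (alpha W y))"
    using idens_eq_minus_ln_alpha[OF assms] channel_pos_iff[OF assms(1)] by (cases "W x y = 0") auto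
qed

lemma alpha_eq_if_column_perm:
  fixes W :: "'x::finite \<Rightarrow> 'y::finite \<Rightarrow> real"
  assumes "bij \<pi>" and "\<And>x. W x y' = W (\<pi> x) y"
  shows "alpha W y' = alpha W y"
proof -
  have "{x. 0 < W x y'} = \<pi> -` {x. 0 < W x y}" using assms(2) by auto
  moreover have "card (\<pi> -` {x. 0 < W x y}) = card {x. 0 < W x y}"
    using assms(1) by (intro card_vimage_inj) (auto simp: bij_def)
  ultimately have "card {x. 0 < W x y'} = card {x. 0 < W x y}" by simp
  then show ?thesis by (simp add: alpha_eq_card)
qed

lemma row_sum_alpha_indep:
  fixes W :: "'x::finite \<Rightarrow> 'y::finite \<Rightarrow> real"
  assumes "gallager_symmetric W"
  shows "(\<Sum>y\<in>UNIV. W x y * h (alpha W y)) = (\<Sum>y\<in>UNIV. W x' y * h (alpha W y))"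
proof -
  obtain Part where part: "partition_on UNIV Part" and
    rows: "\<And>B x x'. B \<in> Part \<Longrightarrow> \<exists>\<sigma>. bij_betw \<sigma> B B \<and> (\<forall>y\<in>B. W x' y = W x (\<sigma> y))" and
    cols: "\<And>B y y'. B \<in> Part \<Longrightarrow> y \<in> B \<Longrightarrow> y' \<in> B \<Longrightarrow> \<exists>\<pi>. bij \<pi> \<and> (\<forall>x. W x y' = W (\<pi> x) y)"
    using assms unfolding gallager_symmetric_def by metis
  have block: "(\<Sum>y\<in>B. W x' y * h (alpha W y)) = (\<Sum>y\<in>B. W x y * h (alpha W y))"
    if B: "B \<in> Part" for B
  proof -
    obtain \<sigma> where \<sigma>: "bij_betw \<sigma> B B" and row: "\<And>y. y \<in> B \<Longrightarrow> W x' y = W x (\<sigma> y)"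
      using rows[OF B] by blast
    have "alpha W (\<sigma> y) = alpha W y" if "y \<in> B" for y
      using cols[OF B that, of "\<sigma> y"] \<sigma> that alpha_eq_if_column_perm
      by (metis bij_betwE)
    then have "(\<Sum>y\<in>B. W x' y * h (alpha W y)) = (\<Sum>y\<in>B. W x (\<sigma> y) * h (alpha W (\<sigma> y)))"
      using row by (intro sum.cong) auto
    also have "\<dots> = (\<Sum>y\<in>B. W x y * h (alpha W y))"
      using sum.reindex_bij_betw[OF \<sigma>] by simp
    finally show ?thesis .
  qed
  have "(\<Sum>y\<in>UNIV. g y) = (\<Sum>B\<in>Part. \<Sum>y\<in>B. g y)" for g :: "'y \<Rightarrow> real"
    using part sum.Union_disjoint[of Part g]
    by (auto simp: partition_on_def disjoint_def)
  then show ?thesis using block by simp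
qed

lemma row_sum_idens_indep:
  fixes W :: "'x::finite \<Rightarrow> 'y::finite \<Rightarrow> real"
  assumes "channel W" and "gallager_symmetric W" and "singular_channel W"
  shows "(\<Sum>y\<in>UNIV. W x y * F (idens W x y)) = (\<Sum>y\<in>UNIV. W x' y * F (idens W x' y))"
  unfolding row_sum_idens_eq_alpha[OF assms(1,3)]
  by (rule row_sum_alpha_indep[OF assms(2)])

lemma qU_sum_alpha_eq_row_sum:
  fixes W :: "'x::finite \<Rightarrow> 'y::finite \<Rightarrow> real"
  assumes "gallager_symmetric W"
  shows "(\<Sum>y\<in>UNIV. qU W y * h (alpha W y)) = (\<Sum>y\<in>UNIV. W x y * h (alpha W y))"
proof -
  have "(\<Sum>y\<in>UNIV. qU W y * h (alpha W y))
      = (\<Sum>x'\<in>UNIV. (\<Sum>y\<in>UNIV. W x' y * h (alpha W y)) / real CARD('x))"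
    unfolding qU_def sum_distrib_right sum_divide_distrib
    by (subst sum.swap) (simp add: algebra_simps)
  also have "\<dots> = (\<Sum>x'\<in>(UNIV :: 'x set). (\<Sum>y\<in>UNIV. W x y * h (alpha W y)) / real CARD('x))"
    using row_sum_alpha_indep[OF assms] by metis
  finally show ?thesis by simp
qed

lemma qU_sum_alpha_eq_row_sum_idens:
  fixes W :: "'x::finite \<Rightarrow> 'y::finite \<Rightarrow> real"
  assumes "channel W" and "gallager_symmetric W" and "singular_channel W"
  shows "(\<Sum>y\<in>UNIV. qU W y * F (- ln (alpha W y))) = (\<Sum>y\<in>UNIV. W x y * F (idens W x y))"
  using qU_sum_alpha_eq_row_sum[OF assms(2), of "\<lambda>a. F (- ln a)"]
    row_sum_idens_eq_alpha[OF assms(1,3)] by simp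

lemma mean_id_indep:
  fixes W :: "'x::finite \<Rightarrow> 'y::finite \<Rightarrow> real"
  assumes "channel W" and "gallager_symmetric W" and "singular_channel W"
  shows "mean_id W x = mean_id W x'"
  unfolding mean_id_def using row_sum_idens_indep[OF assms, of x "\<lambda>t. t"] by simp

lemma var_id_indep:
  fixes W :: "'x::finite \<Rightarrow> 'y::finite \<Rightarrow> real"
  assumes "channel W" and "gallager_symmetric W" and "singular_channel W"
  shows "var_id W x = var_id W x'"
  unfolding var_id_def mean_id_indep[OF assms, of x x']
  by (rule row_sum_idens_indep[OF assms])

lemma sum_dist_mult_const:
  assumes "dist P" and "\<And>x. c x = c x0"
  shows "(\<Sum>x\<in>UNIV. P x * c x) = c x0"
proof -
  have "(\<Sum>x\<in>UNIV. P x * c x) = (\<Sum>x\<in>UNIV. P x) * c x0"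
    unfolding sum_distrib_right by (metis assms(2))
  then show ?thesis using assms(1) by (simp add: dist_def)
qed

lemma mutual_info_eq_avg_mean_id_plus_divergence:
  fixes W :: "'x::finite \<Rightarrow> 'y::finite \<Rightarrow> real"
  assumes "channel W" and "dist P"
  shows "mutual_info P W
    = (\<Sum>x\<in>UNIV. P x * mean_id W x) + (\<Sum>y\<in>UNIV. qP P W y * ln (qU W y / qP P W y))"
proof -
  have split_ln: "P x * W x y * ln (W x y / qP P W y)
     = P x * (W x y * idens W x y) + P x * W x y * ln (qU W y / qP P W y)" for x y
  proof (cases "P x = 0 \<or> W x y = 0")
    case False
    then have "0 < P x" "0 < W x y"
      using assms(2) channel_pos_iff[OF assms(1)] by (auto simp: dist_def less_le)
    have "P x * W x y \<le> qP P W y"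
      unfolding qP_def using assms(2) channel_nonneg[OF assms(1)]
      by (intro member_le_sum[of x UNIV "\<lambda>x. P x * W x y"]) (auto simp: dist_def)
    then have "0 < qP P W y"
      using \<open>0 < P x\<close> \<open>0 < W x y\<close> by (smt (verit) mult_pos_pos)
    moreover have "0 < qU W y"
      using qU_pos_if_pos[OF assms(1) \<open>0 < W x y\<close>] .
    ultimately have "ln (W x y / qP P W y) = idens W x y + ln (qU W y / qP P W y)"
      unfolding idens_def using \<open>0 < W x y\<close> by (simp add: ln_div)
    then show ?thesis by (simp add: algebra_simps)
  qed auto
  have "mutual_info P W = (\<Sum>x\<in>UNIV. P x * mean_id W x)
      + (\<Sum>x\<in>UNIV. \<Sum>y\<in>UNIV. P x * W x y * ln (qU W y / qP P W y))"
    unfolding mutual_info_def split_ln mean_id_def by (simp add: sum.distrib sum_distrib_left)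
  also have "(\<Sum>x\<in>UNIV. \<Sum>y\<in>UNIV. P x * W x y * ln (qU W y / qP P W y))
      = (\<Sum>y\<in>UNIV. qP P W y * ln (qU W y / qP P W y))"
    by (subst sum.swap) (simp add: qP_def sum_distrib_right)
  finally show ?thesis .
qed

definition uniform_input :: "'x::finite \<Rightarrow> real" where
  "uniform_input x = 1 / real CARD('x)"

lemma dist_uniform_input: "dist uniform_input"
  by (simp add: dist_def uniform_input_def)

lemma qP_uniform_input: "qP uniform_input W = qU W"
  by (auto simp: qP_def qU_def uniform_input_def)

lemma sum_qP:
  assumes "channel W" and "dist P"
  shows "(\<Sum>y\<in>UNIV. qP P W y) = 1"
  using assms unfolding qP_def channel_def dist_def
  by (subst sum.swap) (simp flip: sum_distrib_left)

lemma divergence_to_qU_nonpos: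
  fixes W :: "'x::finite \<Rightarrow> 'y::finite \<Rightarrow> real"
  assumes "channel W" and "no_zero_column W" and "dist P"
  shows "(\<Sum>y\<in>UNIV. qP P W y * ln (qU W y / qP P W y)) \<le> 0"
    and "(\<Sum>y\<in>UNIV. qP P W y * ln (qU W y / qP P W y)) = 0 \<Longrightarrow> qP P W = qU W"
proof -
  have nonneg: "0 \<le> qP P W y" for y
    unfolding qP_def using assms(3) channel_nonneg[OF assms(1)] by (auto simp: dist_def intro!: sum_nonneg)
  have sums: "sum (qP P W) UNIV = sum (qU W) UNIV"
    using sum_qP[OF assms(1,3)] sum_qP[OF assms(1) dist_uniform_input]
    by (simp add: qP_uniform_input)
  note gibbs = gibbs_inequality[OF _ nonneg qU_pos[OF assms(1,2)] sums]
  show "(\<Sum>y\<in>UNIV. qP P W y * ln (qU W y / qP P W y)) \<le> 0"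
    using gibbs(1) by simp
  show "qP P W = qU W" if "(\<Sum>y\<in>UNIV. qP P W y * ln (qU W y / qP P W y)) = 0"
    using gibbs(2)[OF _ that] by auto
qed

lemma mutual_info_eq_mean_id_plus_divergence:
  fixes W :: "'x::finite \<Rightarrow> 'y::finite \<Rightarrow> real"
  assumes "channel W" and "gallager_symmetric W" and "singular_channel W" and "dist P"
  shows "mutual_info P W = mean_id W x + (\<Sum>y\<in>UNIV. qP P W y * ln (qU W y / qP P W y))"
  using mutual_info_eq_avg_mean_id_plus_divergence[OF assms(1,4)]
    sum_dist_mult_const[OF assms(4) mean_id_indep[OF assms(1-3)]] by simp

lemma mutual_info_uniform_input:
  fixes W :: "'x::finite \<Rightarrow> 'y::finite \<Rightarrow> real"
  assumes "channel W" and "gallager_symmetric W" and "singular_channel W" and "no_zero_column W"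
  shows "mutual_info uniform_input W = mean_id W x"
  using mutual_info_eq_mean_id_plus_divergence[OF assms(1-3) dist_uniform_input, of x]
    qU_pos[OF assms(1,4), THEN less_imp_neq, THEN not_sym] by (simp add: qP_uniform_input)

lemma capacity_eq_mean_id:
  fixes W :: "'x::finite \<Rightarrow> 'y::finite \<Rightarrow> real"
  assumes "channel W" and "gallager_symmetric W" and "singular_channel W" and "no_zero_column W"
  shows "capacity W = mean_id W x"
proof -
  have "mutual_info P W \<le> mean_id W x" if "dist P" for P
    using mutual_info_eq_mean_id_plus_divergence[OF assms(1-3) that, of x]
      divergence_to_qU_nonpos(1)[OF assms(1,4) that] by simp
  then show ?thesis
    unfolding capacity_def using dist_uniform_input mutual_info_uniform_input[OF assms]
    by (intro cSup_eq_maximum) (auto intro: image_eqI[of _ _ uniform_input])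
qed

lemma Vcond_eq_if_qP_eq_qU:
  "qP P W = qU W \<Longrightarrow> Vcond P W = (\<Sum>x\<in>UNIV. P x * var_id W x)"
  by (simp add: Vcond_def var_id_def mean_id_def idens_def sum_distrib_left mult.assoc)

lemma Vcond_capacity_achieving:
  fixes W :: "'x::finite \<Rightarrow> 'y::finite \<Rightarrow> real"
  assumes "channel W" and "gallager_symmetric W" and "singular_channel W" and "no_zero_column W"
    and "dist Q" and "mutual_info Q W = capacity W"
  shows "Vcond Q W = var_id W x"
proof -
  have "qP Q W = qU W"
    using divergence_to_qU_nonpos(2)[OF assms(1,4,5)] assms(6)
      mutual_info_eq_mean_id_plus_divergence[OF assms(1-3,5), of x]
      capacity_eq_mean_id[OF assms(1-4), of x] by simp
  then show ?thesis
    using sum_dist_mult_const[OF assms(5) var_id_indep[OF assms(1-3)]]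
    by (simp add: Vcond_eq_if_qP_eq_qU)
qed

lemma Veps_eq_var_id:
  fixes W :: "'x::finite \<Rightarrow> 'y::finite \<Rightarrow> real"
  assumes "channel W" and "gallager_symmetric W" and "singular_channel W" and "no_zero_column W"
  shows "Veps W \<epsilon> = var_id W x"
proof -
  have "{Vcond Q W | Q. dist Q \<and> mutual_info Q W = capacity W} = {var_id W x}"
    using Vcond_capacity_achieving[OF assms] dist_uniform_input
      mutual_info_uniform_input[OF assms] capacity_eq_mean_id[OF assms]
    by (auto intro!: exI[of _ uniform_input])
  then show ?thesis unfolding Veps_def by simp
qed

lemma finite_lists_length: "finite {ys :: 'y::finite list. length ys = N}"
  using finite_lists_length_eq[of "UNIV :: 'y set" N] by simp

lemma sum_lists_length_Suc:
  fixes F :: "'y::finite list \<Rightarrow> 'a::comm_monoid_add"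
  shows "(\<Sum>zs\<in>{zs. length zs = Suc N}. F zs) = (\<Sum>ys\<in>{ys. length ys = N}. \<Sum>y\<in>UNIV. F (ys @ [y]))"
proof -
  have image: "{zs :: 'y list. length zs = Suc N} = (\<lambda>(ys, y). ys @ [y]) ` ({ys. length ys = N} \<times> UNIV)"
  proof (intro set_eqI iffI)
    fix zs :: "'y list" assume "zs \<in> {zs. length zs = Suc N}"
    then have "zs = butlast zs @ [last zs]" and "length (butlast zs) = N"
      by (auto intro: append_butlast_last_id[symmetric])
    then show "zs \<in> (\<lambda>(ys, y). ys @ [y]) ` ({ys. length ys = N} \<times> UNIV)" by force
  qed auto
  have inj: "inj_on (\<lambda>(ys, y). ys @ [y]) ({ys :: 'y list. length ys = N} \<times> UNIV)"
    by (auto simp: inj_on_def)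
  show ?thesis
    unfolding image sum.reindex[OF inj] sum.cartesian_product by (simp add: case_prod_beta)
qed

lemma fb_prob_snoc:
  assumes "length ys = N"
  shows "fb_prob W (Suc N) f m (ys @ [y]) = fb_prob W N f m ys * W (f N m ys) y"
proof -
  have "(\<Prod>n<N. W (f n m (take n (ys @ [y]))) ((ys @ [y]) ! n)) = fb_prob W N f m ys"
    unfolding fb_prob_def using assms by (intro prod.cong) (auto simp: nth_append)
  then show ?thesis unfolding fb_prob_def using assms by (simp add: nth_append)
qed

lemma prod_prob_eq_fb_prob: "prod_prob W N (\<lambda>_. x) = fb_prob W N (\<lambda>_ _ _. x) m"
  by (auto simp: prod_prob_def fb_prob_def)

lemma sum_fb_prob_Suc_alpha:
  fixes W :: "'x::finite \<Rightarrow> 'y::finite \<Rightarrow> real"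
  assumes "gallager_symmetric W"
  shows "(\<Sum>zs\<in>{zs. length zs = Suc N}. fb_prob W (Suc N) f m zs * G (map (alpha W) zs))
    = (\<Sum>ys\<in>{ys. length ys = N}. fb_prob W N f m ys *
         (\<lambda>as. \<Sum>y\<in>UNIV. W x y * G (as @ [alpha W y])) (map (alpha W) ys))"
  unfolding sum_lists_length_Suc
proof (intro sum.cong refl)
  fix ys :: "'y list" assume "ys \<in> {ys. length ys = N}"
  then show "(\<Sum>y\<in>UNIV. fb_prob W (Suc N) f m (ys @ [y]) * G (map (alpha W) (ys @ [y])))
    = fb_prob W N f m ys * (\<lambda>as. \<Sum>y\<in>UNIV. W x y * G (as @ [alpha W y])) (map (alpha W) ys)"
    using row_sum_alpha_indep[OF assms, of "f N m ys" "\<lambda>a. G (map (alpha W) ys @ [a])" x]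
    by (simp add: fb_prob_snoc mult.assoc flip: sum_distrib_left)
qed

lemma sum_fb_prob_alpha_eq_prod_prob:
  fixes W :: "'x::finite \<Rightarrow> 'y::finite \<Rightarrow> real"
  assumes "gallager_symmetric W"
  shows "(\<Sum>ys\<in>{ys. length ys = N}. fb_prob W N f m ys * G (map (alpha W) ys))
       = (\<Sum>ys\<in>{ys. length ys = N}. prod_prob W N (\<lambda>_. x) ys * G (map (alpha W) ys))"
proof (induction N arbitrary: G)
  case 0
  have "{ys :: 'y list. length ys = 0} = {[]}" by auto
  then show ?case by (simp add: fb_prob_def prod_prob_def)
next
  case (Suc N)
  show ?case
    unfolding prod_prob_eq_fb_prob[where m = m] sum_fb_prob_Suc_alpha[OF assms, where x = x]
    using Suc.IH unfolding prod_prob_eq_fb_prob[where m = m] .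
qed

lemma sum_S_set_fb_prob_eq_prod_prob:
  fixes W :: "'x::finite \<Rightarrow> 'y::finite \<Rightarrow> real"
  assumes "gallager_symmetric W"
  shows "(\<Sum>ys\<in>S_set W N R. fb_prob W N f m ys) = (\<Sum>ys\<in>S_set W N R. prod_prob W N (\<lambda>_. x) ys)"
proof -
  define in_S where "in_S as \<longleftrightarrow> 1 / real N * (\<Sum>n<N. ln (1 / as ! n)) \<le> R" for as :: "real list"
  have "S_set W N R = {ys. length ys = N} \<inter> {ys. in_S (map (alpha W) ys)}"
    unfolding S_set_def in_S_def by auto
  then show ?thesis
    using sum_fb_prob_alpha_eq_prod_prob[OF assms, of N f m "\<lambda>as. of_bool (in_S as)" x]
    by (simp add: sum_mult_of_bool_eq[OF finite_lists_length])
qed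

theorem lemma10:
  fixes W :: "'x::finite \<Rightarrow> 'y::finite \<Rightarrow> real" and xo :: 'x and \<epsilon> :: real
  assumes "channel W" and "gallager_symmetric W" and "singular_channel W"
    and "no_zero_column W" and "0 < \<epsilon>" and "\<epsilon> < 1"
  shows
    "(\<forall>x (lam::real). mgf W x lam = mgf W xo lam)
     \<and> (\<forall>x. mean_id W x = mean_id W xo \<and> mean_id W xo = capacity W
            \<and> var_id W x = var_id W xo \<and> m3 W x = m3 W xo)
     \<and> var_id W xo = Veps W \<epsilon>
     \<and> (\<forall>(R::real) (N::nat) (f :: nat \<Rightarrow> nat \<Rightarrow> 'y list \<Rightarrow> 'x) (m::nat).
          0 \<le> R \<longrightarrow> 0 < N \<longrightarrow> m \<in> {1..nat \<lceil>exp (real N * R)\<rceil>} \<longrightarrow>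
          (\<Sum>ys\<in>S_set W N R. fb_prob W N f m ys)
            = (\<Sum>ys\<in>S_set W N R. prod_prob W N (\<lambda>_. xo) ys))
     \<and> (\<Sum>y\<in>UNIV. qU W y * (- ln (alpha W y))) = capacity W
     \<and> (\<Sum>y\<in>UNIV. qU W y * (- ln (alpha W y) - capacity W)\<^sup>2) = var_id W xo
     \<and> (\<Sum>y\<in>UNIV. qU W y * \<bar>- ln (alpha W y) - capacity W\<bar> ^ 3) = m3 W xo"
proof -
  note sym = assms(1-3) and sym_nz = assms(1-4)
  note indep = row_sum_idens_indep[OF sym, of _ _ xo]
  note qU_sum = qU_sum_alpha_eq_row_sum_idens[OF sym, of _ xo]
  have C: "capacity W = mean_id W xo" by (rule capacity_eq_mean_id[OF sym_nz])
  show ?thesis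
  proof (intro conjI allI impI)
    show "mgf W x lam = mgf W xo lam" for x lam
      unfolding mgf_def by (rule indep)
    show "m3 W x = m3 W xo" for x
      unfolding m3_def by (rule indep)
    show "(\<Sum>y\<in>UNIV. qU W y * \<bar>- ln (alpha W y) - capacity W\<bar> ^ 3) = m3 W xo"
      unfolding m3_def by (rule qU_sum)
    show "(\<Sum>y\<in>UNIV. qU W y * (- ln (alpha W y))) = capacity W"
      unfolding C mean_id_def by (rule qU_sum)
    show "(\<Sum>y\<in>UNIV. qU W y * (- ln (alpha W y) - capacity W)\<^sup>2) = var_id W xo"
      unfolding C var_id_def by (rule qU_sum)
  qed (use C mean_id_indep[OF sym, of _ xo] var_id_indep[OF sym, of _ xo]
        Veps_eq_var_id[OF sym_nz, of \<epsilon> xo] sum_S_set_fb_prob_eq_prod_prob[OF assms(2)] in auto)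
qed

end
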